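(* Let $Y\in\mathbb{R}^n$ satisfy $Y=X\beta+\sigma\xi$, where $X\in\mathbb{R}^{n\times p}$ is a deterministic matrix with columns $X_1,\dots,X_p$, $\beta\in\mathbb{R}^p$, $\sigma>0$ and $\xi\sim\mathcal{N}(0,\mathbb{I}_n)$. Let $q\ge1$ and let $\pi=\pi_1\otimes\cdots\otimes\pi_p$ be a prior on $\beta$ with independent components, $\pi_j$ being the law of $\beta_j$. Then $$\inf_{\hat T}\mathbb{E}_\pi\mathbf{E}_\beta\sum_{j=1}^p|\hat T_j(X,Y)-\beta_j|^q\ \ge\ \sum_{j=1}^p\inf_{\hat T_j}\mathbb{E}_{\pi_j}\mathbf{E}_{\beta_j}|\hat T_j(X_j,\tilde Y_j)-\beta_j|^q,$$ where $\tilde Y_j=Y-\sum_{i\ne j}X_i\beta_i=\beta_jX_j+\sigma\xi$, the infimum on the left is over all $\mathbb{R}^p$-valued measurable functions $\hat T=(\hat T_1,\dots,\hat T_p)$ of $(X,Y)$, and each infimum on the right is over all real-valued measurable functions $\hat T_j$ of $(X_j,\tilde Y_j)$.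
   Context: $\mathbf{E}_\beta$ denotes expectation over $\xi$ for fixed $\beta$; $\mathbb{E}_\pi$ denotes expectation over $\beta\sim\pi$ (resp. $\mathbb{E}_{\pi_j}$ over $\beta_j\sim\pi_j$). *)

theory Defs
  imports "HOL-Probability.Probability"
begin

definition gauss_noise :: "('n::finite \<Rightarrow> real) measure" where
  "gauss_noise = PiM UNIV (\<lambda>_. density lborel std_normal_density)"

definition obs :: "('n::finite \<Rightarrow> 'p::finite \<Rightarrow> real) \<Rightarrow> real \<Rightarrow> ('p \<Rightarrow> real) \<Rightarrow> ('n \<Rightarrow> real) \<Rightarrow> ('n \<Rightarrow> real)" where
  "obs X \<sigma> \<beta> \<xi> = (\<lambda>i. (\<Sum>j\<in>UNIV. X i j * \<beta> j) + \<sigma> * \<xi> i)"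

definition obs_j :: "('n::finite \<Rightarrow> 'p::finite \<Rightarrow> real) \<Rightarrow> real \<Rightarrow> 'p \<Rightarrow> real \<Rightarrow> ('n \<Rightarrow> real) \<Rightarrow> ('n \<Rightarrow> real)" where
  "obs_j X \<sigma> j b \<xi> = (\<lambda>i. b * X i j + \<sigma> * \<xi> i)"

end

theory Submission
  imports Defs
begin

text \<open>The risk splits into a sum of coordinate risks. For coordinate j, integrate first over
  the coordinate \<open>\<beta>\<^sub>j\<close> and only then over the other coordinates \<open>\<beta>\<^sub>-\<^sub>j\<close> of the product
  prior. Once \<open>\<beta>\<^sub>-\<^sub>j\<close> is fixed, \<open>Y\<close> is the reduced observation translated by the
  known vector \<open>\<Sum>\<^sub>i\<^sub>\<noteq>\<^sub>j X\<^sub>i \<beta>\<^sub>i\<close>, so \<open>T\<^sub>j\<close> composed with this translation is an estimator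
  in the reduced problem, and its risk is at least the reduced Bayes risk.\<close>

lemma prob_space_gauss_noise: "prob_space (gauss_noise :: ('n::finite \<Rightarrow> real) measure)"
  unfolding gauss_noise_def by (intro prob_space_PiM prob_space_normal_density) simp

lemma sets_gauss_noise:
  "sets (gauss_noise :: ('n::finite \<Rightarrow> real) measure) = sets (PiM UNIV (\<lambda>_::'n. borel))"
  unfolding gauss_noise_def by (intro sets_PiM_cong) auto

lemma measurable_obs:
  "(\<lambda>(\<beta>, \<xi>). obs X \<sigma> \<beta> \<xi>)
     \<in> PiM UNIV (\<lambda>_. borel) \<Otimes>\<^sub>M PiM UNIV (\<lambda>_. borel) \<rightarrow>\<^sub>M PiM UNIV (\<lambda>_. borel)"
  unfolding obs_def by (rule measurable_PiM_single') (simp_all add: split_beta')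

lemma obs_fun_upd:
  "obs X \<sigma> (\<beta>(j := b)) \<xi> = (\<lambda>i. obs_j X \<sigma> j b \<xi> i + (\<Sum>k\<in>UNIV - {j}. X i k * \<beta> k))"
  unfolding obs_def obs_j_def by (rule ext) (simp add: sum.remove[of UNIV j] algebra_simps)

lemma measurable_translate:
  fixes c :: "'i \<Rightarrow> real"
  shows "(\<lambda>y i. y i + c i) \<in> PiM UNIV (\<lambda>_. borel) \<rightarrow>\<^sub>M PiM UNIV (\<lambda>_. borel)"
  by (rule measurable_PiM_single') auto

lemma nn_integral_PiM_ge_if_sections_ge:
  assumes "\<And>i. prob_space (M i)" "finite I" "j \<in> I"
    and f: "f \<in> borel_measurable (PiM I M)"
    and sections: "\<And>x. c \<le> (\<integral>\<^sup>+ y. f (x(j := y)) \<partial>M j)"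
  shows "c \<le> integral\<^sup>N (PiM I M) f"
proof -
  interpret product_prob_space M
    by (simp add: product_prob_space_def product_prob_space_axioms_def product_sigma_finite_def
        assms(1) prob_space_imp_sigma_finite)
  have I: "insert j (I - {j}) = I" using \<open>j \<in> I\<close> by auto
  interpret rest: prob_space "PiM (I - {j}) M" by (rule prob_space_PiM) (rule assms(1))
  have "c = (\<integral>\<^sup>+ x. c \<partial>PiM (I - {j}) M)"
    by (simp add: rest.emeasure_space_1)
  also have "\<dots> \<le> (\<integral>\<^sup>+ x. (\<integral>\<^sup>+ y. f (x(j := y)) \<partial>M j) \<partial>PiM (I - {j}) M)"
    by (rule nn_integral_mono) (rule sections)
  also have "\<dots> = integral\<^sup>N (PiM I M) f"
    using product_nn_integral_insert[of "I - {j}" j f, unfolded I] f \<open>finite I\<close> by simp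
  finally show ?thesis .
qed

lemma nn_integral_nn_integral_sum:
  assumes "finite J" "sigma_finite_measure N"
    and f: "\<And>j. j \<in> J \<Longrightarrow> case_prod (f j) \<in> borel_measurable (M \<Otimes>\<^sub>M N)"
  shows "(\<integral>\<^sup>+ x. (\<integral>\<^sup>+ y. (\<Sum>j\<in>J. f j x y) \<partial>N) \<partial>M) = (\<Sum>j\<in>J. \<integral>\<^sup>+ x. (\<integral>\<^sup>+ y. f j x y \<partial>N) \<partial>M)"
proof -
  interpret N: sigma_finite_measure N by fact
  have "(\<integral>\<^sup>+ x. (\<integral>\<^sup>+ y. (\<Sum>j\<in>J. f j x y) \<partial>N) \<partial>M) = (\<integral>\<^sup>+ x. (\<Sum>j\<in>J. \<integral>\<^sup>+ y. f j x y \<partial>N) \<partial>M)"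
    by (intro nn_integral_cong nn_integral_sum) (use measurable_Pair2[OF f] in auto)
  also have "\<dots> = (\<Sum>j\<in>J. \<integral>\<^sup>+ x. (\<integral>\<^sup>+ y. f j x y \<partial>N) \<partial>M)"
    by (intro nn_integral_sum N.borel_measurable_nn_integral f)
  finally show ?thesis .
qed

lemma measurable_coordinate_loss:
  fixes \<pi> :: "'p::finite \<Rightarrow> real measure"
  assumes "\<And>j. sets (\<pi> j) = sets borel"
    and T: "T \<in> PiM UNIV (\<lambda>_::'n::finite. borel) \<rightarrow>\<^sub>M PiM UNIV (\<lambda>_::'p. borel)"
  shows "(\<lambda>(\<beta>, \<xi>). ennreal (\<bar>T (obs X \<sigma> \<beta> \<xi>) j - \<beta> j\<bar> powr q))
           \<in> borel_measurable (PiM UNIV \<pi> \<Otimes>\<^sub>M gauss_noise)"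
proof -
  have [measurable]: "(\<lambda>y. T y j) \<in> borel_measurable (PiM UNIV (\<lambda>_::'n. borel))"
    using T by measurable
  have "(\<lambda>(\<beta>, \<xi>). ennreal (\<bar>T (obs X \<sigma> \<beta> \<xi>) j - \<beta> j\<bar> powr q))
      \<in> borel_measurable (PiM UNIV (\<lambda>_::'p. borel) \<Otimes>\<^sub>M PiM UNIV (\<lambda>_::'n. borel))"
    using measurable_obs by measurable
  moreover have "sets (PiM UNIV \<pi> \<Otimes>\<^sub>M gauss_noise)
      = sets (PiM UNIV (\<lambda>_::'p. borel) \<Otimes>\<^sub>M PiM UNIV (\<lambda>_::'n. borel))"
    by (intro sets_pair_measure_cong sets_PiM_cong sets_gauss_noise) (auto simp: assms(1))
  ultimately show ?thesis
    by (simp cong: measurable_cong_sets)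
qed

lemma coordinate_risk_ge_reduced_bayes_risk:
  fixes X :: "'n::finite \<Rightarrow> 'p::finite \<Rightarrow> real"
    and \<pi> :: "'p \<Rightarrow> real measure"
  assumes prior: "\<And>j. prob_space (\<pi> j)" "\<And>j. sets (\<pi> j) = sets borel"
    and T: "T \<in> PiM UNIV (\<lambda>_::'n. borel) \<rightarrow>\<^sub>M PiM UNIV (\<lambda>_::'p. borel)"
  shows "(INF t \<in> borel_measurable (PiM UNIV (\<lambda>_::'n. borel)).
            \<integral>\<^sup>+ b. (\<integral>\<^sup>+ \<xi>. ennreal (\<bar>t (obs_j X \<sigma> j b \<xi>) - b\<bar> powr q) \<partial>gauss_noise) \<partial>\<pi> j)
       \<le> (\<integral>\<^sup>+ \<beta>. (\<integral>\<^sup>+ \<xi>. ennreal (\<bar>T (obs X \<sigma> \<beta> \<xi>) j - \<beta> j\<bar> powr q) \<partial>gauss_noise)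
            \<partial>PiM UNIV \<pi>)"
    (is "?reduced \<le> integral\<^sup>N _ ?risk")
proof -
  interpret G: prob_space "gauss_noise :: ('n \<Rightarrow> real) measure" by (rule prob_space_gauss_noise)
  have risk: "?risk \<in> borel_measurable (PiM UNIV \<pi>)"
    using measurable_coordinate_loss[OF prior(2) T] by (rule G.borel_measurable_nn_integral)
  have sections: "?reduced \<le> (\<integral>\<^sup>+ b. ?risk (\<beta>(j := b)) \<partial>\<pi> j)" for \<beta>
  proof -
    define shift where "shift i = (\<Sum>k\<in>UNIV - {j}. X i k * \<beta> k)" for i
    have [measurable]: "(\<lambda>y. T y j) \<in> borel_measurable (PiM UNIV (\<lambda>_::'n. borel))"
      using T by measurable
    have "(\<lambda>y. T (\<lambda>i. y i + shift i) j) \<in> borel_measurable (PiM UNIV (\<lambda>_::'n. borel))"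
      using measurable_translate by measurable
    then have "?reduced \<le> (\<integral>\<^sup>+ b. (\<integral>\<^sup>+ \<xi>.
        ennreal (\<bar>T (\<lambda>i. obs_j X \<sigma> j b \<xi> i + shift i) j - b\<bar> powr q) \<partial>gauss_noise) \<partial>\<pi> j)"
      by (rule INF_lower)
    also have "\<dots> = (\<integral>\<^sup>+ b. ?risk (\<beta>(j := b)) \<partial>\<pi> j)"
      by (simp add: obs_fun_upd shift_def)
    finally show ?thesis .
  qed
  show ?thesis
    by (rule nn_integral_PiM_ge_if_sections_ge[OF prior(1) finite UNIV_I risk sections])
qed

theorem lemma2:
  fixes X :: "'n::finite \<Rightarrow> 'p::finite \<Rightarrow> real"
    and \<sigma> q :: real
    and \<pi> :: "'p \<Rightarrow> real measure"
  assumes "\<sigma> > 0"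
    and "q \<ge> 1"
    and "\<And>j. prob_space (\<pi> j)"
    and "\<And>j. sets (\<pi> j) = sets borel"
  shows "(INF T \<in> PiM UNIV (\<lambda>_::'n. borel) \<rightarrow>\<^sub>M PiM UNIV (\<lambda>_::'p. borel).
            \<integral>\<^sup>+ \<beta>. (\<integral>\<^sup>+ \<xi>. ennreal (\<Sum>j\<in>UNIV. \<bar>T (obs X \<sigma> \<beta> \<xi>) j - \<beta> j\<bar> powr q) \<partial>gauss_noise)
              \<partial>(PiM UNIV \<pi>))
       \<ge> (\<Sum>j\<in>UNIV. INF t \<in> borel_measurable (PiM UNIV (\<lambda>_::'n. borel)).
            \<integral>\<^sup>+ b. (\<integral>\<^sup>+ \<xi>. ennreal (\<bar>t (obs_j X \<sigma> j b \<xi>) - b\<bar> powr q) \<partial>gauss_noise) \<partial>(\<pi> j))"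
proof -
  let ?lower = "\<Sum>j\<in>UNIV. INF t \<in> borel_measurable (PiM UNIV (\<lambda>_::'n. borel)).
            \<integral>\<^sup>+ b. (\<integral>\<^sup>+ \<xi>. ennreal (\<bar>t (obs_j X \<sigma> j b \<xi>) - b\<bar> powr q) \<partial>gauss_noise) \<partial>(\<pi> j)"
  have "?lower \<le> (\<integral>\<^sup>+ \<beta>. (\<integral>\<^sup>+ \<xi>. ennreal (\<Sum>j\<in>UNIV. \<bar>T (obs X \<sigma> \<beta> \<xi>) j - \<beta> j\<bar> powr q)
      \<partial>gauss_noise) \<partial>PiM UNIV \<pi>)"
    if T: "T \<in> PiM UNIV (\<lambda>_::'n. borel) \<rightarrow>\<^sub>M PiM UNIV (\<lambda>_::'p. borel)" for T
  proof -
    have "?lower \<le> (\<Sum>j\<in>UNIV. \<integral>\<^sup>+ \<beta>. (\<integral>\<^sup>+ \<xi>. ennreal (\<bar>T (obs X \<sigma> \<beta> \<xi>) j - \<beta> j\<bar> powr q)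
        \<partial>gauss_noise) \<partial>PiM UNIV \<pi>)"
      by (intro sum_mono coordinate_risk_ge_reduced_bayes_risk assms T)
    also have "\<dots> = (\<integral>\<^sup>+ \<beta>. (\<integral>\<^sup>+ \<xi>. (\<Sum>j\<in>UNIV. ennreal (\<bar>T (obs X \<sigma> \<beta> \<xi>) j - \<beta> j\<bar> powr q))
        \<partial>gauss_noise) \<partial>PiM UNIV \<pi>)"
      by (intro nn_integral_nn_integral_sum[symmetric] measurable_coordinate_loss[OF assms(4) T]
          finite prob_space_imp_sigma_finite prob_space_gauss_noise)
    finally show ?thesis
      by (simp add: sum_ennreal)
  qed
  then show ?thesis
    by (rule INF_greatest)
qed

end
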